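(* Let $R$ be a ring and let $(f_k)_{k\in\mathbb{Z}_{\geq 0}}$ be a sequence of elements of $R$ with $f_0=1$. For $s\in\mathbb{Z}_{\geq 0}$ and $0\le k\le s$, let $\nu_{s,k}\in\mathbb{Z}$ be the coefficient of $z^k$ in the Laurent polynomial $(z+z^{-1})^s\in\mathbb{Z}[z^{\pm1}]$. Suppose that for every $s\in\mathbb{Z}_{\geq0}$ we have $f_1^s=\sum_{k=0}^s \nu_{s,k}f_k$. Then $f_s=T_s(f_1)$ for all $s\geq 1$.
   Context: The Chebyshev polynomials of the first kind $T_k(z)\in\mathbb{Z}[z]$, $k\ge 0$, are defined by $T_0(z)=2$, $T_1(z)=z$, and $T_{k+1}(z)=zT_k(z)-T_{k-1}(z)$; equivalently $T_k(z+z^{-1})=z^k+z^{-k}$. *)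

theory Defs
  imports "HOL-Computational_Algebra.Formal_Laurent_Series"
begin

fun cheb :: "nat \<Rightarrow> 'a::ring_1 \<Rightarrow> 'a" where
  "cheb 0 x = 2"
| "cheb (Suc 0) x = x"
| "cheb (Suc (Suc k)) x = x * cheb (Suc k) x - cheb k x"

definition nu :: "nat \<Rightarrow> nat \<Rightarrow> int" where
  "nu s k = fls_nth ((fls_X + fls_X_inv :: int fls) ^ s) (int k)"

end

theory Submission
  imports Defs "HOL-Library.Groups_Big_Fun"
begin

text \<open>Put \<open>g(0) = 1\<close>, \<open>g(k) = T\<^sub>k(x)\<close> for \<open>k \<ge> 1\<close> and \<open>g(j) = 0\<close> for \<open>j < 0\<close>. Then
  \<open>x g(j) = g(j + 1) + g(j - 1)\<close> for all integers \<open>j\<close>, up to a correction \<open>+1\<close> at \<open>j = 1\<close>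
  and \<open>-1\<close> at \<open>j = -1\<close>. Multiplying \<open>\<Sum>\<^sub>j \<nu>(s, j) g(j)\<close> by \<open>x\<close> thus gives
  \<open>\<Sum>\<^sub>j \<nu>(s + 1, j) g(j)\<close>, the corrections cancelling because \<open>\<nu>(s, 1) = \<nu>(s, -1)\<close>;
  hence \<open>x\<^sup>s = \<Sum>\<^sub>k \<nu>(s, k) g(k)\<close>, i.e. \<open>g\<close> solves the hypothesis for \<open>x = f\<^sub>1\<close>.
  Since \<open>\<nu>(s, s) = 1\<close>, the hypothesis is a unitriangular system determining \<open>f\<^sub>s\<close>
  from \<open>f\<^sub>0, \<dots>, f\<^sub>s\<^sub>-\<^sub>1\<close>, so \<open>f = g\<close>.\<close>

definition nu_int :: "nat \<Rightarrow> int \<Rightarrow> int" where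
  "nu_int s j = fls_nth ((fls_X + fls_X_inv :: int fls) ^ s) j"

lemma nu_eq_nu_int: "nu s k = nu_int s (int k)"
  by (simp add: nu_def nu_int_def)

lemma nu_int_0: "nu_int 0 j = (if j = 0 then 1 else 0)"
  by (simp add: nu_int_def)

lemma nu_int_Suc: "nu_int (Suc s) j = nu_int s (j - 1) + nu_int s (j + 1)"
  by (simp add: nu_int_def distrib_right fls_X_times_conv_shift fls_X_inv_times_conv_shift)

lemma nu_int_eq_0: "int s < \<bar>j\<bar> \<Longrightarrow> nu_int s j = 0"
proof (induction s arbitrary: j)
  case (Suc s)
  then show ?case by (simp add: nu_int_Suc)
qed (simp add: nu_int_0)

lemma nu_int_minus: "nu_int s (- j) = nu_int s j"
proof (induction s arbitrary: j)
  case (Suc s)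
  have "- j - 1 = - (j + 1)" "- j + 1 = - (j - 1)"
    by simp_all
  then show ?case
    by (simp only: nu_int_Suc Suc.IH add.commute)
qed (simp add: nu_int_0)

lemma nu_int_diag: "nu_int s (int s) = 1"
  by (induction s) (simp_all add: nu_int_0 nu_int_Suc nu_int_eq_0)

text \<open>The solution \<open>g\<close> of the system, extended by zero to negative indices;
  note \<open>g\<^sub>0 = 1\<close>, not \<open>T\<^sub>0 = 2\<close>.\<close>
definition cheb_seq :: "'a::ring_1 \<Rightarrow> int \<Rightarrow> 'a" where
  "cheb_seq x j = (if j < 0 then 0 else if j = 0 then 1 else cheb (nat j) x)"

lemma cheb_seq_recurrence:
  "x * cheb_seq x j = cheb_seq x (j + 1) + cheb_seq x (j - 1) + (of_bool (j = 1) - of_bool (j = - 1))"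
proof -
  consider "j < -1" | "j = -1" | "j = 0" | "j = 1" | "j \<ge> 2" by linarith
  then show ?thesis
  proof cases
    case 5
    define k where "k = nat (j - 2)"
    with 5 have "nat j = Suc (Suc k)" "nat (j + 1) = Suc (Suc (Suc k))" "nat (j - 1) = Suc k"
      by simp_all
    with 5 show ?thesis by (simp add: cheb_seq_def)
  qed (auto simp: cheb_seq_def numeral_2_eq_2)
qed

text \<open>Summing over all of \<open>\<int>\<close> makes the index shifts \<open>j \<mapsto> j \<plusminus> 1\<close> bijective,
  so no boundary terms arise.\<close>
lemma power_eq_Sum_any_nu_int_cheb_seq:
  fixes x :: "'a::ring_1"
  shows "x ^ s = Sum_any (\<lambda>j. of_int (nu_int s j) * cheb_seq x j)"
proof (induction s)
  case 0
  show ?case by (subst Sum_any.expand_superset[of "{0}"]) (auto simp: nu_int_0 cheb_seq_def)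
next
  case (Suc s)
  define c where "c j = (of_int (nu_int s j) :: 'a)" for j
  have vanish: "c j = 0" if "int s < \<bar>j\<bar>" for j
    using that by (simp add: c_def nu_int_eq_0)
  have fin: "finite {j. g j \<noteq> 0}" if "\<And>j. int s + 1 < \<bar>j\<bar> \<Longrightarrow> g j = 0" for g :: "int \<Rightarrow> 'a"
  proof (rule finite_subset)
    show "{j. g j \<noteq> 0} \<subseteq> {- int s - 1..int s + 1}"
      using that by force
  qed simp
  have shift: "Sum_any (\<lambda>j. c j * cheb_seq x (j + d)) = Sum_any (\<lambda>j. c (j - d) * cheb_seq x j)" for d
    by (rule Sum_any.reindex_cong[of "\<lambda>j. j - d"]) (auto simp: bij_def inj_def surj_def fun_eq_iff)
  have correction: "Sum_any (\<lambda>j. c j * (of_bool (j = 1) - of_bool (j = - 1))) = 0"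
  proof -
    have "Sum_any (\<lambda>j. c j * (of_bool (j = 1) - of_bool (j = - 1))) = c 1 - c (- 1)"
      by (subst Sum_any.expand_superset[of "{1, -1}"]) auto
    then show ?thesis by (simp add: c_def nu_int_minus[of s 1, simplified])
  qed
  have "x ^ Suc s = x * Sum_any (\<lambda>j. c j * cheb_seq x j)"
    by (simp add: Suc.IH c_def)
  also have "\<dots> = Sum_any (\<lambda>j. x * (c j * cheb_seq x j))"
    by (rule Sum_any_right_distrib) (rule fin, simp add: vanish)
  also have "\<dots> = Sum_any (\<lambda>j. c j * cheb_seq x (j + 1) + c j * cheb_seq x (j - 1)
                        + c j * (of_bool (j = 1) - of_bool (j = - 1)))"
  proof (rule Sum_any.cong)
    fix j
    have "x * (c j * cheb_seq x j) = c j * (x * cheb_seq x j)"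
      unfolding c_def by (metis mult.assoc mult_of_int_commute)
    then show "x * (c j * cheb_seq x j) = c j * cheb_seq x (j + 1) + c j * cheb_seq x (j - 1)
                        + c j * (of_bool (j = 1) - of_bool (j = - 1))"
      by (simp only: cheb_seq_recurrence distrib_left)
  qed
  also have "\<dots> = Sum_any (\<lambda>j. c j * cheb_seq x (j + 1)) + Sum_any (\<lambda>j. c j * cheb_seq x (j - 1))"
    by (simp add: Sum_any.distrib fin vanish correction)
  also have "\<dots> = Sum_any (\<lambda>j. (c (j - 1) + c (j + 1)) * cheb_seq x j)"
    using shift[of 1] shift[of "- 1"] by (simp add: Sum_any.distrib distrib_right fin vanish)
  also have "\<dots> = Sum_any (\<lambda>j. of_int (nu_int (Suc s) j) * cheb_seq x j)"
    by (simp add: c_def nu_int_Suc)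
  finally show ?case .
qed

lemma power_eq_sum_nu_cheb_seq:
  fixes x :: "'a::ring_1"
  shows "x ^ s = (\<Sum>k=0..s. of_int (nu s k) * cheb_seq x (int k))"
proof -
  have "x ^ s = (\<Sum>j\<in>int ` {0..s}. of_int (nu_int s j) * cheb_seq x j)"
  proof (subst power_eq_Sum_any_nu_int_cheb_seq, rule Sum_any.expand_superset)
    show "{j. of_int (nu_int s j) * cheb_seq x j \<noteq> 0} \<subseteq> int ` {0..s}"
    proof
      fix j assume "j \<in> {j. of_int (nu_int s j) * cheb_seq x j \<noteq> 0}"
      then have "nu_int s j \<noteq> 0" "0 \<le> j"
        by (auto simp: cheb_seq_def split: if_splits)
      moreover from this have "j \<le> int s"
        using nu_int_eq_0[of s j] by linarith
      ultimately show "j \<in> int ` {0..s}"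
        by (auto simp: image_iff intro!: bexI[of _ "nat j"])
    qed
  qed simp
  then show ?thesis by (simp add: sum.reindex nu_eq_nu_int)
qed

lemma unitriangular_solution_unique:
  fixes f g :: "nat \<Rightarrow> 'a::ring_1" and a :: "nat \<Rightarrow> nat \<Rightarrow> 'a"
  assumes "\<And>s. a s s = 1"
    and "\<And>s. (\<Sum>k=0..s. a s k * f k) = (\<Sum>k=0..s. a s k * g k)"
  shows "f s = g s"
proof (induction s rule: less_induct)
  case (less s)
  have "(\<Sum>k<s. a s k * f k) + f s = (\<Sum>k<s. a s k * g k) + g s"
    using assms(2)[of s] by (simp add: atLeast0AtMost lessThan_Suc_atMost[symmetric] assms(1))
  moreover have "(\<Sum>k<s. a s k * f k) = (\<Sum>k<s. a s k * g k)"
    using less by simp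
  ultimately show ?case by simp
qed

theorem lemma4p5:
  fixes f :: "nat \<Rightarrow> 'a::ring_1"
  assumes "f 0 = 1"
    and "\<And>s. f 1 ^ s = (\<Sum>k=0..s. of_int (nu s k) * f k)"
  shows "\<forall>s\<ge>1. f s = cheb s (f 1)"
proof -
  \<comment> \<open>\<open>f 0 = 1\<close> is the case \<open>s = 0\<close> of the second hypothesis and is not needed.\<close>
  have f_eq: "f s = cheb_seq (f 1) (int s)" for s
  proof (rule unitriangular_solution_unique[where a = "\<lambda>s k. of_int (nu s k)"])
    show "of_int (nu s s) = 1" for s
      by (simp add: nu_eq_nu_int nu_int_diag)
    show "(\<Sum>k=0..s. of_int (nu s k) * f k) = (\<Sum>k=0..s. of_int (nu s k) * cheb_seq (f 1) (int k))"
      for s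
      by (simp flip: assms(2) power_eq_sum_nu_cheb_seq)
  qed
  show ?thesis
  proof (intro allI impI)
    fix s :: nat
    assume "s \<ge> 1"
    with f_eq[of s] show "f s = cheb s (f 1)"
      by (simp add: cheb_seq_def)
  qed
qed

end
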